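(* Consider the ADEPT-type cluster-randomized SMART of the context with common cluster size $m$ and a scalar cluster-level baseline covariate $X_i$ with $E[X_i]=0$ and $0<\mathrm{Var}(X_i)<\infty$. Fix $b_2\in\{1,-1\}$. Assume: (a) consistency of potential outcomes; (b) correct mean model: $E_{a_1,a_2}[Y_{ij}\mid X_i]=\beta_{(a_1,a_2)}+\eta X_i$ for $(a_1,a_2)\in\{(1,b_2),(-1,\cdot)\}$; (c) $\mathrm{Cov}_{1,b_2}(\mathbf Y_i)=\mathrm{Cov}_{-1,\cdot}(\mathbf Y_i)=\sigma^2\mathrm{Exch}_m(\rho)$; (d) $E_{1,b_2}[\mathbf e_i\mathbf e_i^T\mid R_i=0]\preceq E_{1,b_2}[\mathbf e_i\mathbf e_i^T]$ in the Loewner order, with $\mathbf e_i=\mathbf Y_i-(\beta_{(1,b_2)}+\eta X_i)1_m$. Let $c=\eta^2\mathrm{Var}(X_i)/\sigma^2$ denote $\mathrm{Cor}^2(Y_{ij},X_i)$ and $\rho^*=(\rho-c)/(1-c)$. Then $$\tau^2(1,b_2)\le\frac{2(2-p_1)\sigma^2(1-c)[1+(m-1)\rho^*]}{m},\qquad \tau^2(-1,\cdot)=\frac{2\sigma^2(1-c)[1+(m-1)\rho^*]}{m},$$ and, for any $\delta>0$ and $\alpha,\beta\in(0,1)$, $$\frac{(z_\beta+z_{\alpha/2})^2\big(\tau^2(1,b_2)+\tau^2(-1,\cdot)\big)}{\delta^2\sigma^2}\le\frac{4(z_\beta+z_{\alpha/2})^2}{m\delta^2}\,(1+(m-1)\rho^*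 )\Big(1+\frac{1-p_1}{2}\Big)[1-c].$$
   Context: ADEPT-type cluster-randomized SMART. There are $N$ i.i.d. clusters, each with $m$ individuals and outcome vector $\mathbf Y_i\in\mathbb R^m$. A scalar baseline covariate $X_i$ is measured before randomization. - Stage 1: $A_{1i}\in\{1,-1\}$ is assigned with probability $1/2$ each. - A response indicator $R_i\in\{0,1\}$ is then observed, with $p_1=\Pr(R_i=1\mid A_{1i}=1)$. - Stage 2: only clusters with $A_{1i}=1,R_i=0$ are re-randomized, to $A_{2i}\in\{1,-1\}$ with probability $1/2$ each. The embedded DTRs are $(1,1)$, $(1,-1)$ and $(-1,\cdot)$. - A cluster with $A_{1i}=-1$ is consistent with $(-1,\cdot)$. - A cluster with $A_{1i}=1,R_i=1$ is consistent with both $(1,\pm1)$. - A cluster with $A_{1i}=1,R_i=0,A_{2i}=a_2$ is consistent with $(1,a_2)$. $I_i(a_1,a_2)$ is the corresponding consistency indicator. The known weights are $W_i=4$ if $A_{1i}=1,R_i=0$ and $W_i=2$ otherwise. $E_{a_1,a_2}$ and $\mathrm{Cov}_{a_1,a_2}$ refer to the potential-outcome distribution had all clusters followed the DTR. The model $\beta_{(a_1,a_2)}+\eta X_i$, with one $\beta$ per embedded DTR and a common $\eta$, is fit by solving $$\sum_i\sum_{(a_1,a_2)}I_i(a_1,a_2)\,W_i\,D_{i,(a_1,a_2)}^TV^{-1}\big(\mathbf Y_i-(\beta_{(a_1,a_2)}+\eta X_i)1_m\big)=0,$$ where $D_{i,(a_1,a_2)}$ is the derivative of the mean vector with respect to $(\beta,\eta)$.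 The working covariance is exchangeable, $V=s^2\mathrm{Exch}_m(r)$ (positive definite); $\mathrm{Exch}_m(r)$ has unit diagonal and off-diagonal entries $r$. $\tau^2(a_1,a_2)$ is the diagonal entry corresponding to $\beta_{(a_1,a_2)}$ of the sandwich asymptotic covariance $J^{-1}AJ^{-1}$ of $\sqrt N(\hat\beta,\hat\eta)$. $z_\kappa$ is the upper $\kappa$ quantile of the standard normal distribution. *)

theory Defs
  imports "HOL-Probability.Probability"
begin

text \<open>Embedded DTRs of the ADEPT-type SMART, encoded as integer pairs
  (a1, a2); the DTR (-1, .) is encoded as (-1, 0).\<close>
definition dtrs :: "(int \<times> int) set" where
  "dtrs = {(1, 1), (1, -1), (-1, 0)}"

text \<open>Position of the parameters in the 4-dimensional parameter vector
  (beta_(1,1), beta_(1,-1), beta_(-1,.), eta).\<close>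
definition pidx :: "int \<times> int \<Rightarrow> 4" where
  "pidx d = (if d = (1, 1) then 0 else if d = (1, -1) then 1 else 2)"

definition eta_idx :: 4 where
  "eta_idx = 3"

definition consistent :: "int \<times> int \<Rightarrow> int \<Rightarrow> bool \<Rightarrow> int \<Rightarrow> bool" where
  "consistent d a1 r a2 \<longleftrightarrow> a1 = fst d \<and> (a1 = 1 \<longrightarrow> (r \<or> a2 = snd d))"

definition weight :: "int \<Rightarrow> bool \<Rightarrow> real" where
  "weight a1 r = (if a1 = 1 \<and> \<not> r then 4 else 2)"

definition exch :: "real \<Rightarrow> real^'m^'m" where
  "exch r = (\<chi> j k. if j = k then 1 else r)"

text \<open>Derivative (m x 4 matrix) of the mean vector (beta_d + eta x) 1_m w.r.t. theta.\<close>
definition Dmat :: "int \<times> int \<Rightarrow> real \<Rightarrow> real^4^'m" where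
  "Dmat d x = (\<chi> j k. if k = pidx d then 1 else if k = eta_idx then x else 0)"

definition est_fun :: "real^'m^'m \<Rightarrow> real^4 \<Rightarrow> int \<Rightarrow> bool \<Rightarrow> int \<Rightarrow> real \<Rightarrow> real^'m \<Rightarrow> real^4" where
  "est_fun V \<theta> a1 r a2 x y =
     (\<Sum>d\<in>dtrs. (if consistent d a1 r a2 then weight a1 r else 0) *\<^sub>R
        (transpose (Dmat d x) ** matrix_inv V *v (y - Dmat d x *v \<theta>)))"

text \<open>Minus the derivative of the estimating function w.r.t. theta.\<close>
definition bread_fun :: "real^'m^'m \<Rightarrow> int \<Rightarrow> bool \<Rightarrow> int \<Rightarrow> real \<Rightarrow> real^4^4" where
  "bread_fun V a1 r a2 x =
     (\<Sum>d\<in>dtrs. (if consistent d a1 r a2 then weight a1 r else 0) *\<^sub>R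
        (transpose (Dmat d x) ** matrix_inv V ** Dmat d x))"

definition sandwich_tau2 ::
  "'a measure \<Rightarrow> real^'m^'m \<Rightarrow> real^4 \<Rightarrow> ('a \<Rightarrow> int) \<Rightarrow> ('a \<Rightarrow> bool) \<Rightarrow> ('a \<Rightarrow> int)
    \<Rightarrow> ('a \<Rightarrow> real) \<Rightarrow> ('a \<Rightarrow> real^'m) \<Rightarrow> int \<times> int \<Rightarrow> real" where
  "sandwich_tau2 M V \<theta> A1 R A2 X Y d =
     (let J = (\<chi> k l. \<integral>\<omega>. bread_fun V (A1 \<omega>) (R \<omega>) (A2 \<omega>) (X \<omega>) $ k $ l \<partial>M);
          A = (\<chi> k l. \<integral>\<omega>. est_fun V \<theta> (A1 \<omega>) (R \<omega>) (A2 \<omega>) (X \<omega>) (Y \<omega>) $ k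
                          * est_fun V \<theta> (A1 \<omega>) (R \<omega>) (A2 \<omega>) (X \<omega>) (Y \<omega>) $ l \<partial>M);
          S = matrix_inv J ** A ** matrix_inv J
      in S $ pidx d $ pidx d)"

definition loewner_le :: "real^'n^'n \<Rightarrow> real^'n^'n \<Rightarrow> bool" where
  "loewner_le A B \<longleftrightarrow> (\<forall>v. v \<bullet> (A *v v) \<le> v \<bullet> (B *v v))"

definition z_upper :: "real \<Rightarrow> real" where
  "z_upper \<kappa> = (THE z. measure (density lborel std_normal_density) {z<..} = \<kappa>)"

definition pot_space :: "(int \<times> int \<Rightarrow> real^'m) measure" where
  "pot_space = PiM dtrs (\<lambda>_. borel)"

text \<open>Independence of two random variables with possibly different value types
  (the library's indep_var requires a common value type): the sigma-algebras
  they generate are independent.\<close>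
definition indep_rv :: "'a measure \<Rightarrow> 'b measure \<Rightarrow> ('a \<Rightarrow> 'b) \<Rightarrow> 'c measure \<Rightarrow> ('a \<Rightarrow> 'c) \<Rightarrow> bool" where
  "indep_rv M Ma A Mb B \<longleftrightarrow>
     A \<in> measurable M Ma \<and> B \<in> measurable M Mb \<and>
     prob_space.indep_set M {A -` S \<inter> space M | S. S \<in> sets Ma} {B -` S \<inter> space M | S. S \<in> sets Mb}"

end

theory Submission
  imports Defs
begin

text \<open>The working covariance is exchangeable with the all-ones vector as eigenvector, so every
  column of its inverse sums to the same constant and each estimating equation only sees the
  cluster total of the residuals. Randomization makes the treatments independent of the
  covariate, the response and the potential outcomes, so a weighted expectation equals the
  expectation of the weight averaged over the four treatment paths. The inverse probability
  weights average to one, hence the expected bread is diagonal; their squares average to 2, or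
  to 4 on the non-responders of a treated arm. Thus tau^2 of an arm is E[W^2 S^2] / m^2 with S
  the cluster residual total, the exchangeable covariance and the correct mean model give
  E S^2 = m sigma^2 (1 - c) (1 + (m - 1) rho*), and condition (d), tested against the all-ones
  vector, bounds the non-responder part by (1 - p1) E S^2.\<close>

lemma integral_indicator_mult_indep:
  fixes A :: "'a \<Rightarrow> 'c" and Z :: "'a \<Rightarrow> 'b" and f :: "'b \<Rightarrow> real"
  assumes P: "prob_space M" and I: "indep_rv M (count_space UNIV) A Mb Z"
    and f[measurable]: "f \<in> borel_measurable Mb"
  shows "(\<integral>\<omega>. indicator {\<omega>. A \<omega> = a} \<omega> * f (Z \<omega>) \<partial>M)
       = measure M {\<omega>\<in>space M. A \<omega> = a} * (\<integral>\<omega>. f (Z \<omega>) \<partial>M)"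
proof -
  interpret prob_space M by (rule P)
  have [measurable]: "A \<in> measurable M (count_space UNIV)" "Z \<in> measurable M Mb"
    and ind: "indep_set {A -` S \<inter> space M | S. S \<in> sets (count_space UNIV)} {Z -` S \<inter> space M | S. S \<in> sets Mb}"
    using I unfolding indep_rv_def by auto
  define E where "E = {\<omega>\<in>space M. A \<omega> = a}"
  have E: "E \<in> sets M" unfolding E_def by measurable
  have "E \<in> {A -` S \<inter> space M | S. S \<in> sets (count_space UNIV)}"
    unfolding E_def by (rule CollectI, rule exI[of _ "{a}"]) auto
  then have indep_E: "B \<in> sets Mb \<Longrightarrow> prob (E \<inter> (Z -` B \<inter> space M)) = prob E * prob (Z -` B \<inter> space M)" for B
    using ind unfolding indep_sets2_eq by blast
  let ?N = "distr (density M (\<lambda>x. ennreal (indicator E x))) Mb Z"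
  have restricted_law: "?N = density (distr M Mb Z) (\<lambda>_. prob E)"
  proof (rule measure_eqI)
    fix B assume "B \<in> sets ?N"
    then have B[measurable]: "B \<in> sets Mb" by simp
    have "emeasure ?N B = (\<integral>\<^sup>+x. indicator E x * indicator (Z -` B \<inter> space M) x \<partial>M)"
      using E by (simp add: emeasure_distr emeasure_density)
        (auto intro!: nn_integral_cong simp: mult.commute split: split_indicator)
    also have "\<dots> = (\<integral>\<^sup>+x. indicator (E \<inter> (Z -` B \<inter> space M)) x \<partial>M)"
      by (auto intro!: nn_integral_cong split: split_indicator)
    also have "\<dots> = ennreal (prob E * prob (Z -` B \<inter> space M))"
      using indep_E[OF B] E by (subst nn_integral_indicator) (auto simp: emeasure_eq_measure)
    also have "\<dots> = emeasure (density (distr M Mb Z) (\<lambda>_. prob E)) B"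
      by (subst emeasure_density) (auto simp: nn_integral_cmult emeasure_distr emeasure_eq_measure ennreal_mult)
    finally show "emeasure ?N B = emeasure (density (distr M Mb Z) (\<lambda>_. prob E)) B" .
  qed simp
  have "(\<integral>\<omega>. indicator {\<omega>. A \<omega> = a} \<omega> * f (Z \<omega>) \<partial>M) = (\<integral>\<omega>. indicator E \<omega> * f (Z \<omega>) \<partial>M)"
    by (intro Bochner_Integration.integral_cong refl) (auto simp: E_def split: split_indicator)
  also have "\<dots> = integral\<^sup>L ?N f"
    using E by (simp add: integral_distr integral_density[of "\<lambda>x. f (Z x)" M "indicator E"])
  also have "\<dots> = prob E * (\<integral>\<omega>. f (Z \<omega>) \<partial>M)"
    unfolding restricted_law by (subst integral_density) (auto simp: integral_distr)
  finally show ?thesis unfolding E_def .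
qed

lemma integrable_bounded_mult:
  fixes f g :: "'a \<Rightarrow> real"
  assumes "integrable M f" "g \<in> borel_measurable M" "\<And>x. x \<in> space M \<Longrightarrow> \<bar>g x\<bar> \<le> B"
  shows "integrable M (\<lambda>x. g x * f x)"
proof (rule Bochner_Integration.integrable_bound[where f="\<lambda>x. B * f x"])
  show "integrable M (\<lambda>x. B * f x)" using assms(1) by simp
  show "(\<lambda>x. g x * f x) \<in> borel_measurable M" using assms(1,2) by measurable
  have "\<bar>g x\<bar> * \<bar>f x\<bar> \<le> \<bar>B\<bar> * \<bar>f x\<bar>" if "x \<in> space M" for x
    using assms(3)[OF that] by (intro mult_right_mono) auto
  then show "AE x in M. norm (g x * f x) \<le> norm (B * f x)"
    by (intro AE_I2) (simp add: abs_mult)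
qed

lemma integrable_mult_square_integrable:
  fixes f g :: "'a \<Rightarrow> real"
  assumes "integrable M (\<lambda>x. (f x)\<^sup>2)" "integrable M (\<lambda>x. (g x)\<^sup>2)"
    and [measurable]: "f \<in> borel_measurable M" "g \<in> borel_measurable M"
  shows "integrable M (\<lambda>x. f x * g x)"
proof (rule Bochner_Integration.integrable_bound[where f="\<lambda>x. (f x)\<^sup>2 + (g x)\<^sup>2"])
  show "integrable M (\<lambda>x. (f x)\<^sup>2 + (g x)\<^sup>2)" using assms(1,2) by simp
  have "\<bar>f x * g x\<bar> \<le> (f x)\<^sup>2 + (g x)\<^sup>2" for x
  proof -
    have "2 * (\<bar>f x\<bar> * \<bar>g x\<bar>) \<le> (f x)\<^sup>2 + (g x)\<^sup>2"
      using sum_squares_bound[of "\<bar>f x\<bar>" "\<bar>g x\<bar>"] by simp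
    moreover have "0 \<le> \<bar>f x\<bar> * \<bar>g x\<bar>" by simp
    ultimately show ?thesis unfolding abs_mult by linarith
  qed
  then show "AE x in M. norm (f x * g x) \<le> norm ((f x)\<^sup>2 + (g x)\<^sup>2)"
    by (intro AE_I2) simp
qed measurable

lemma square_integrable_add:
  fixes f g :: "'a \<Rightarrow> real"
  assumes "integrable M (\<lambda>x. (f x)\<^sup>2)" "integrable M (\<lambda>x. (g x)\<^sup>2)"
    and [measurable]: "f \<in> borel_measurable M" "g \<in> borel_measurable M"
  shows "integrable M (\<lambda>x. (f x + g x)\<^sup>2)"
  using assms integrable_mult_square_integrable[OF assms]
  by (simp add: power2_sum mult.assoc)

lemma (in prob_space) integral_of_bool_mult_le:
  fixes f :: "'a \<Rightarrow> real"
  assumes "{\<omega>\<in>space M. P \<omega>} \<in> sets M"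
    and "(\<integral>\<omega>. of_bool (P \<omega>) * f \<omega> \<partial>M) / prob {\<omega>\<in>space M. P \<omega>} \<le> c"
  shows "(\<integral>\<omega>. of_bool (P \<omega>) * f \<omega> \<partial>M) \<le> prob {\<omega>\<in>space M. P \<omega>} * c"
proof (cases "prob {\<omega>\<in>space M. P \<omega>} = 0")
  case True
  then have "AE \<omega> in M. \<omega> \<notin> {\<omega>\<in>space M. P \<omega>}"
    using assms(1) by (intro AE_not_in null_setsI) (auto simp: emeasure_eq_measure)
  then have "AE \<omega> in M. of_bool (P \<omega>) * f \<omega> = 0"
    using AE_space by eventually_elim auto
  then show ?thesis
    using True by (simp add: integral_eq_zero_AE)
next
  case False
  then show ?thesis
    using assms(2) by (simp add: divide_le_eq mult.commute zero_less_measure_iff)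
qed

lemma borel_measurable_vec_nth [measurable]: "(\<lambda>v::real^'n. v $ j) \<in> borel_measurable borel"
  by (intro borel_measurable_continuous_onI linear_continuous_on bounded_linear_vec_nth)

lemma matrix_inv_unique:
  fixes A B :: "real^'n^'n"
  assumes "A ** B = mat 1" "B ** A = mat 1"
  shows "matrix_inv A = B"
proof -
  define C where "C = matrix_inv A"
  have C: "A ** C = mat 1 \<and> C ** A = mat 1"
    unfolding C_def matrix_inv_def by (rule someI_ex) (use assms in blast)
  have "C = C ** (A ** B)" using assms by (simp add: matrix_mul_rid)
  also have "\<dots> = (C ** A) ** B" by (simp add: matrix_mul_assoc)
  also have "\<dots> = B" using C by (simp add: matrix_mul_lid)
  finally show ?thesis unfolding C_def .
qed

lemma sandwich_diag_nth:
  fixes A :: "real^'n^'n" and c :: "'n \<Rightarrow> real"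
  assumes nz: "\<And>k. c k \<noteq> 0"
  defines "J \<equiv> \<chi> k l. if k = l then c k else 0"
  shows "(matrix_inv J ** A ** matrix_inv J) $ p $ p = A $ p $ p / (c p)\<^sup>2"
proof -
  define J' :: "real^'n^'n" where "J' = (\<chi> k l. if k = l then 1 / c k else 0)"
  have delta: "(\<Sum>k\<in>UNIV. (if i = k then a i else 0) * (if k = j then b k else 0))
      = (if i = j then a i * b i else 0)" for a b :: "'n \<Rightarrow> real" and i j
  proof -
    have "(\<Sum>k\<in>UNIV. (if i = k then a i else 0) * (if k = j then b k else 0))
        = (\<Sum>k\<in>UNIV. if k = i then (if i = j then a i * b i else 0) else 0)"
      by (rule sum.cong) auto
    then show ?thesis by simp
  qed
  have "J ** J' = mat 1" "J' ** J = mat 1"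
    unfolding J_def J'_def matrix_matrix_mult_def mat_def
    by (simp_all only: vec_eq_iff vec_lambda_beta delta[where a = c]
        delta[where a = "\<lambda>i. 1 / c i" and b = c]) (simp_all add: nz)
  then have "matrix_inv J = J'" by (rule matrix_inv_unique)
  then show ?thesis
    unfolding J'_def matrix_matrix_mult_def
    by (simp add: if_distrib if_distribR power2_eq_square cong: if_cong)
qed

lemma exch_row_sum:
  "(\<Sum>k\<in>UNIV. (exch r :: real^'m^'m) $ j $ k) = 1 + (real CARD('m) - 1) * r"
proof -
  have "(\<Sum>k\<in>UNIV. (exch r :: real^'m^'m) $ j $ k) = (\<Sum>k\<in>UNIV. r + (if k = j then 1 - r else 0))"
    by (rule sum.cong) (auto simp: exch_def)
  then show ?thesis by (simp add: sum.distrib algebra_simps)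
qed

lemma exch_col_sum:
  "(\<Sum>j\<in>UNIV. (exch r :: real^'m^'m) $ j $ k) = 1 + (real CARD('m) - 1) * r"
  using exch_row_sum[of r k] by (simp add: exch_def eq_commute)

lemma exch_mult_ones:
  "(exch r :: real^'m^'m) *v (\<chi> i. 1) = (1 + (real CARD('m) - 1) * r) *\<^sub>R (\<chi> i. 1)"
  by (simp add: matrix_vector_mult_def vec_eq_iff exch_row_sum)

lemma exch_inverse_col_sum:
  fixes r s2 :: real
  assumes s2: "0 < s2" and pd: "\<forall>v::real^'m. v \<noteq> 0 \<longrightarrow> 0 < v \<bullet> (exch r *v v)"
  defines "V \<equiv> s2 *\<^sub>R (exch r :: real^'m^'m)"
    and "lam \<equiv> s2 * (1 + (real CARD('m) - 1) * r)"
  shows "0 < lam" and "(\<Sum>j\<in>UNIV. matrix_inv V $ j $ k) = 1 / lam"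
proof -
  have "((\<chi> i. 1) :: real^'m) \<noteq> 0" by (simp add: vec_eq_iff)
  then have "0 < ((\<chi> i. 1) :: real^'m) \<bullet> (exch r *v (\<chi> i. 1))" using pd by blast
  then have "0 < real CARD('m) * (1 + (real CARD('m) - 1) * r)"
    by (simp add: exch_mult_ones inner_vec_def)
  then show lam_pos: "0 < lam" unfolding lam_def using s2 by (simp add: zero_less_mult_iff)
  have "V *v x = s2 *\<^sub>R (exch r *v x)" for x
    by (simp add: V_def matrix_vector_mult_def vec_eq_iff sum_distrib_left mult.assoc)
  then have "\<forall>x. V *v x = 0 \<longrightarrow> x = 0"
    using pd s2 by (metis inner_zero_right less_irrefl scaleR_eq_0_iff)
  then obtain B where B: "B ** V = mat 1" using matrix_left_invertible_ker by blast
  then have B': "V ** B = mat 1" using matrix_left_right_inverse by blast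
  have "1 = (\<Sum>i\<in>UNIV. (V ** B) $ i $ k)"
    using B' by (simp add: mat_def)
  also have "\<dots> = (\<Sum>j\<in>UNIV. (\<Sum>i\<in>UNIV. V $ i $ j) * B $ j $ k)"
    unfolding matrix_matrix_mult_def by (simp add: sum_distrib_right) (rule sum.swap)
  also have "\<dots> = lam * (\<Sum>j\<in>UNIV. B $ j $ k)"
    unfolding V_def lam_def by (simp add: exch_col_sum sum_distrib_left flip: sum_distrib_left)
  finally show "(\<Sum>j\<in>UNIV. matrix_inv V $ j $ k) = 1 / lam"
    using lam_pos matrix_inv_unique[OF B' B] by (simp add: field_simps)
qed

definition mean_deriv :: "int \<times> int \<Rightarrow> 4 \<Rightarrow> real \<Rightarrow> real" where
  "mean_deriv d k x = (if k = pidx d then 1 else if k = eta_idx then x else 0)"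

definition ipw :: "int \<times> int \<Rightarrow> int \<Rightarrow> bool \<Rightarrow> int \<Rightarrow> real" where
  "ipw d a1 r a2 = (if consistent d a1 r a2 then weight a1 r else 0)"

lemma finite_dtrs [simp]: "finite dtrs"
  by (simp add: dtrs_def)

lemma pidx_neq_eta_idx [simp]: "pidx d \<noteq> eta_idx" "eta_idx \<noteq> pidx d"
  by (simp_all add: pidx_def eta_idx_def)

lemma pidx_eq_iff: "d \<in> dtrs \<Longrightarrow> d' \<in> dtrs \<Longrightarrow> pidx d = pidx d' \<longleftrightarrow> d = d'"
  by (auto simp: pidx_def dtrs_def)

lemma mean_deriv_pidx:
  "d \<in> dtrs \<Longrightarrow> d' \<in> dtrs \<Longrightarrow> mean_deriv d (pidx d') x = (if d = d' then 1 else 0)"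
  by (auto simp: mean_deriv_def pidx_eq_iff)

lemma Dmat_nth: "Dmat d x $ j $ k = mean_deriv d k x"
  by (simp add: Dmat_def mean_deriv_def)

lemma Dmat_mult_vec_nth: "(Dmat d x *v \<theta>) $ j = \<theta> $ pidx d + x * \<theta> $ eta_idx"
proof -
  have "(Dmat d x *v \<theta>) $ j
      = (\<Sum>k\<in>UNIV. (if k = pidx d then \<theta> $ k else 0) + (if k = eta_idx then x * \<theta> $ k else 0))"
    unfolding matrix_vector_mult_def by (simp, rule sum.cong) (auto simp: Dmat_def)
  then show ?thesis by (simp add: sum.distrib)
qed

context
  fixes V :: "real^'m^'m" and \<mu> :: real
  assumes inverse_col_sum: "\<And>k. (\<Sum>j\<in>UNIV. matrix_inv V $ j $ k) = \<mu>"
begin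

lemma Dmat_transpose_inverse_mult_nth:
  "(transpose (Dmat d x) ** matrix_inv V *v w) $ k = mean_deriv d k x * \<mu> * (\<Sum>i\<in>UNIV. w $ i)"
proof -
  have "(transpose (Dmat d x) ** matrix_inv V *v w) $ k
      = (\<Sum>i\<in>UNIV. mean_deriv d k x * (\<Sum>j\<in>UNIV. matrix_inv V $ j $ i) * w $ i)"
    by (simp add: matrix_vector_mult_def matrix_matrix_mult_def transpose_def Dmat_nth
        sum_distrib_left sum_distrib_right mult.assoc)
  then show ?thesis by (simp add: inverse_col_sum sum_distrib_left mult.assoc)
qed

lemma est_fun_pidx:
  assumes "d \<in> dtrs"
  shows "est_fun V \<theta> a1 r a2 x y $ pidx d
       = ipw d a1 r a2 * \<mu> * (\<Sum>j\<in>UNIV. y $ j - \<theta> $ pidx d - x * \<theta> $ eta_idx)"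
proof -
  have "est_fun V \<theta> a1 r a2 x y $ pidx d
      = (\<Sum>d'\<in>dtrs. ipw d' a1 r a2 * (if d' = d then 1 else 0) * \<mu> * (\<Sum>j\<in>UNIV. (y - Dmat d' x *v \<theta>) $ j))"
    unfolding est_fun_def ipw_def[symmetric]
    by (simp add: Dmat_transpose_inverse_mult_nth, rule sum.cong)
      (simp_all add: mean_deriv_pidx assms mult.assoc)
  also have "\<dots> = ipw d a1 r a2 * \<mu> * (\<Sum>j\<in>UNIV. (y - Dmat d x *v \<theta>) $ j)"
    using assms by (simp add: if_distrib if_distribR cong: if_cong)
  finally show ?thesis
    by (simp add: Dmat_mult_vec_nth algebra_simps)
qed

lemma bread_fun_nth:
  "bread_fun V a1 r a2 x $ k $ l
     = (\<Sum>d\<in>dtrs. ipw d a1 r a2 * (mean_deriv d k x * mean_deriv d l x)) * (real CARD('m) * \<mu>)"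
proof -
  have "(transpose (Dmat d x) ** matrix_inv V ** Dmat d x) $ k $ l
      = mean_deriv d k x * mean_deriv d l x * (real CARD('m) * \<mu>)" for d
  proof -
    have "(transpose (Dmat d x) ** matrix_inv V ** Dmat d x) $ k $ l
        = (\<Sum>i\<in>UNIV. mean_deriv d k x * (\<Sum>j\<in>UNIV. matrix_inv V $ j $ i) * mean_deriv d l x)"
      by (simp add: matrix_matrix_mult_def transpose_def Dmat_nth
          sum_distrib_left sum_distrib_right mult.assoc)
    then show ?thesis by (simp add: inverse_col_sum)
  qed
  then show ?thesis
    unfolding bread_fun_def ipw_def[symmetric] by (simp add: sum_distrib_right mult.assoc)
qed

end

text \<open>A2 is drawn for every cluster and only read when A1 = 1 and R = 0, so the four
  treatment paths (a1, a2) are equally likely whatever the response.\<close>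
definition path_mean :: "(int \<Rightarrow> bool \<Rightarrow> int \<Rightarrow> real) \<Rightarrow> bool \<Rightarrow> real" where
  "path_mean g r = (\<Sum>a1\<in>{1,-1}. \<Sum>a2\<in>{1,-1}. g a1 r a2) / 4"

lemma path_mean_ipw: "d \<in> dtrs \<Longrightarrow> path_mean (ipw d) r = 1"
  by (auto simp: path_mean_def dtrs_def ipw_def consistent_def weight_def)

lemma path_mean_ipw_square:
  "d \<in> dtrs \<Longrightarrow> path_mean (\<lambda>a1 r a2. (ipw d a1 r a2)\<^sup>2) r = 2 + 2 * of_bool (fst d = 1 \<and> \<not> r)"
  by (auto simp: path_mean_def dtrs_def ipw_def consistent_def weight_def)

lemma path_mean_treated_response: "path_mean (\<lambda>a1 r a2. of_bool (a1 = 1 \<and> r)) r = of_bool r / 2"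
  by (cases r) (simp_all add: path_mean_def)

locale adept_design = prob_space M
  for M :: "'a measure" and X :: "'a \<Rightarrow> real" and A1 A2 :: "'a \<Rightarrow> int" and R R1 :: "'a \<Rightarrow> bool"
    and Yp :: "int \<times> int \<Rightarrow> 'a \<Rightarrow> real^'m" +
  assumes meas_X[measurable]: "X \<in> borel_measurable M"
    and meas_A1[measurable]: "A1 \<in> measurable M (count_space UNIV)"
    and meas_A2[measurable]: "A2 \<in> measurable M (count_space UNIV)"
    and meas_R[measurable]: "R \<in> measurable M (count_space UNIV)"
    and meas_R1[measurable]: "R1 \<in> measurable M (count_space UNIV)"
    and A1_vals: "\<forall>\<omega>\<in>space M. A1 \<omega> = 1 \<or> A1 \<omega> = -1"
    and A1_prob: "measure M {\<omega>\<in>space M. A1 \<omega> = 1} = 1/2"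
    and A2_vals: "\<forall>\<omega>\<in>space M. A2 \<omega> = 1 \<or> A2 \<omega> = -1"
    and A2_prob: "measure M {\<omega>\<in>space M. A2 \<omega> = 1} = 1/2"
    and A1_indep: "indep_rv M (count_space UNIV) A1
                     (borel \<Otimes>\<^sub>M count_space UNIV \<Otimes>\<^sub>M pot_space)
                     (\<lambda>\<omega>. (X \<omega>, R1 \<omega>, (\<lambda>d\<in>dtrs. Yp d \<omega>)))"
    and A2_indep: "indep_rv M (count_space UNIV) A2
                     (count_space UNIV \<Otimes>\<^sub>M borel \<Otimes>\<^sub>M count_space UNIV \<Otimes>\<^sub>M pot_space)
                     (\<lambda>\<omega>. (A1 \<omega>, X \<omega>, R1 \<omega>, (\<lambda>d\<in>dtrs. Yp d \<omega>)))"
    and cons_R: "\<forall>\<omega>\<in>space M. A1 \<omega> = 1 \<longrightarrow> R \<omega> = R1 \<omega>"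
begin

abbreviation baseline_space :: "(real \<times> bool \<times> (int \<times> int \<Rightarrow> real^'m)) measure" where
  "baseline_space \<equiv> borel \<Otimes>\<^sub>M count_space UNIV \<Otimes>\<^sub>M pot_space"

definition baseline :: "'a \<Rightarrow> real \<times> bool \<times> (int \<times> int \<Rightarrow> real^'m)" where
  "baseline \<omega> = (X \<omega>, R1 \<omega>, (\<lambda>d\<in>dtrs. Yp d \<omega>))"

lemma baseline_simps [simp]:
  "fst (baseline \<omega>) = X \<omega>" "fst (snd (baseline \<omega>)) = R1 \<omega>"
  "d \<in> dtrs \<Longrightarrow> snd (snd (baseline \<omega>)) d = Yp d \<omega>"
  by (simp_all add: baseline_def)

lemma measurable_baseline [measurable]: "baseline \<in> measurable M baseline_space"
  using A1_indep unfolding indep_rv_def baseline_def by auto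

lemma prob_treatment:
  assumes "a \<in> {1, -1}"
  shows "prob {\<omega>\<in>space M. A1 \<omega> = a} = 1/2" and "prob {\<omega>\<in>space M. A2 \<omega> = a} = 1/2"
proof -
  have "{\<omega>\<in>space M. A1 \<omega> = -1} = space M - {\<omega>\<in>space M. A1 \<omega> = 1}"
    "{\<omega>\<in>space M. A2 \<omega> = -1} = space M - {\<omega>\<in>space M. A2 \<omega> = 1}"
    using A1_vals A2_vals by auto
  then show "prob {\<omega>\<in>space M. A1 \<omega> = a} = 1/2" "prob {\<omega>\<in>space M. A2 \<omega> = a} = 1/2"
    using assms A1_prob A2_prob by (auto simp: prob_compl)
qed

lemma integral_treatment_indicators:
  fixes f :: "real \<times> bool \<times> (int \<times> int \<Rightarrow> real^'m) \<Rightarrow> real"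
  assumes [measurable]: "f \<in> borel_measurable baseline_space" and "a1 \<in> {1, -1}" "a2 \<in> {1, -1}"
  shows "(\<integral>\<omega>. indicator {\<omega>. A1 \<omega> = a1} \<omega> * indicator {\<omega>. A2 \<omega> = a2} \<omega> * f (baseline \<omega>) \<partial>M)
       = (\<integral>\<omega>. f (baseline \<omega>) \<partial>M) / 4"
proof -
  have "(\<integral>\<omega>. indicator {\<omega>. A1 \<omega> = a1} \<omega> * indicator {\<omega>. A2 \<omega> = a2} \<omega> * f (baseline \<omega>) \<partial>M)
      = (\<integral>\<omega>. indicator {\<omega>. A2 \<omega> = a2} \<omega> * (\<lambda>(a, z). indicator {a1} a * f z) (A1 \<omega>, baseline \<omega>) \<partial>M)"
    by (simp add: indicator_def mult_ac)
  also have "\<dots> = prob {\<omega>\<in>space M. A2 \<omega> = a2} * (\<integral>\<omega>. indicator {\<omega>. A1 \<omega> = a1} \<omega> * f (baseline \<omega>) \<partial>M)"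
    using integral_indicator_mult_indep[OF prob_space_axioms A2_indep, of "\<lambda>(a, z). indicator {a1} a * f z" a2]
    by (simp add: baseline_def indicator_def)
  also have "\<dots> = prob {\<omega>\<in>space M. A2 \<omega> = a2} * prob {\<omega>\<in>space M. A1 \<omega> = a1} * (\<integral>\<omega>. f (baseline \<omega>) \<partial>M)"
    using integral_indicator_mult_indep[OF prob_space_axioms A1_indep, of f a1]
    by (simp add: baseline_def)
  finally show ?thesis
    by (simp add: prob_treatment(1)[OF assms(2)] prob_treatment(2)[OF assms(3)])
qed

lemma integrable_response_mult:
  fixes f :: "real \<times> bool \<times> (int \<times> int \<Rightarrow> real^'m) \<Rightarrow> real" and h :: "bool \<Rightarrow> real"
  assumes [measurable]: "f \<in> borel_measurable baseline_space" and "integrable M (\<lambda>\<omega>. f (baseline \<omega>))"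
  shows "integrable M (\<lambda>\<omega>. h (R1 \<omega>) * f (baseline \<omega>))"
proof (rule integrable_bounded_mult[OF assms(2), where B = "\<bar>h True\<bar> + \<bar>h False\<bar>"])
  show "\<bar>h (R1 \<omega>)\<bar> \<le> \<bar>h True\<bar> + \<bar>h False\<bar>" for \<omega>
    by (cases "R1 \<omega>") auto
qed measurable

lemma integral_design_average:
  fixes f :: "real \<times> bool \<times> (int \<times> int \<Rightarrow> real^'m) \<Rightarrow> real" and g :: "int \<Rightarrow> bool \<Rightarrow> int \<Rightarrow> real"
  assumes [measurable]: "f \<in> borel_measurable baseline_space" and f_int: "integrable M (\<lambda>\<omega>. f (baseline \<omega>))"
  shows "(\<integral>\<omega>. g (A1 \<omega>) (R1 \<omega>) (A2 \<omega>) * f (baseline \<omega>) \<partial>M)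
       = (\<integral>\<omega>. path_mean g (R1 \<omega>) * f (baseline \<omega>) \<partial>M)"
proof -
  let ?I = "\<lambda>a1 a2 \<omega>. indicator {\<omega>. A1 \<omega> = a1} \<omega> * indicator {\<omega>. A2 \<omega> = a2} \<omega> :: real"
  have int: "integrable M (\<lambda>\<omega>. ?I a1 a2 \<omega> * (g a1 (R1 \<omega>) a2 * f (baseline \<omega>)))" for a1 a2
    by (rule integrable_bounded_mult[OF integrable_response_mult[OF assms], where B = 1])
       (auto simp: indicator_def)
  have "(\<integral>\<omega>. g (A1 \<omega>) (R1 \<omega>) (A2 \<omega>) * f (baseline \<omega>) \<partial>M)
      = (\<integral>\<omega>. (\<Sum>a1\<in>{1,-1}. \<Sum>a2\<in>{1,-1}. ?I a1 a2 \<omega> * (g a1 (R1 \<omega>) a2 * f (baseline \<omega>))) \<partial>M)"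
    using A1_vals A2_vals by (intro Bochner_Integration.integral_cong) (auto simp: indicator_def)
  also have "\<dots> = (\<Sum>a1\<in>{1,-1}. \<Sum>a2\<in>{1,-1}.
      \<integral>\<omega>. ?I a1 a2 \<omega> * (g a1 (R1 \<omega>) a2 * f (baseline \<omega>)) \<partial>M)"
    using int by (simp only: Bochner_Integration.integral_sum Bochner_Integration.integrable_sum)
  also have "\<dots> = (\<Sum>a1\<in>{1,-1}. \<Sum>a2\<in>{1,-1}. (\<integral>\<omega>. g a1 (R1 \<omega>) a2 * f (baseline \<omega>) \<partial>M) / 4)"
  proof (intro sum.cong refl)
    fix a1 a2 :: int assume "a1 \<in> {1, -1}" "a2 \<in> {1, -1}"
    then show "(\<integral>\<omega>. ?I a1 a2 \<omega> * (g a1 (R1 \<omega>) a2 * f (baseline \<omega>)) \<partial>M)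
        = (\<integral>\<omega>. g a1 (R1 \<omega>) a2 * f (baseline \<omega>) \<partial>M) / 4"
      using integral_treatment_indicators[of "\<lambda>z. g a1 (fst (snd z)) a2 * f z"]
      by (simp add: mult.assoc)
  qed
  also have "\<dots> = (\<integral>\<omega>. path_mean g (R1 \<omega>) * f (baseline \<omega>) \<partial>M)"
  proof -
    have "integrable M (\<lambda>\<omega>. g a1 (R1 \<omega>) a2 * f (baseline \<omega>) / 4)" for a1 a2
      using integrable_response_mult[OF assms, of "\<lambda>r. g a1 r a2"] by simp
    then show ?thesis
      by (simp add: path_mean_def add_divide_distrib ring_distribs)
  qed
  finally show ?thesis .
qed

lemma ipw_response_eq:
  "\<omega> \<in> space M \<Longrightarrow> ipw d (A1 \<omega>) (R \<omega>) (A2 \<omega>) = ipw d (A1 \<omega>) (R1 \<omega>) (A2 \<omega>)"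
  using cons_R A1_vals by (auto simp: ipw_def consistent_def weight_def)

lemma integral_ipw:
  fixes f :: "real \<times> bool \<times> (int \<times> int \<Rightarrow> real^'m) \<Rightarrow> real"
  assumes "d \<in> dtrs" and [measurable]: "f \<in> borel_measurable baseline_space"
    and f_int: "integrable M (\<lambda>\<omega>. f (baseline \<omega>))"
  shows "(\<integral>\<omega>. ipw d (A1 \<omega>) (R \<omega>) (A2 \<omega>) * f (baseline \<omega>) \<partial>M) = (\<integral>\<omega>. f (baseline \<omega>) \<partial>M)"
proof -
  have "(\<integral>\<omega>. ipw d (A1 \<omega>) (R \<omega>) (A2 \<omega>) * f (baseline \<omega>) \<partial>M)
      = (\<integral>\<omega>. ipw d (A1 \<omega>) (R1 \<omega>) (A2 \<omega>) * f (baseline \<omega>) \<partial>M)"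
    by (intro Bochner_Integration.integral_cong) (simp_all add: ipw_response_eq)
  also have "\<dots> = (\<integral>\<omega>. f (baseline \<omega>) \<partial>M)"
    unfolding integral_design_average[OF assms(2,3)]
    by (simp add: path_mean_ipw assms(1))
  finally show ?thesis .
qed

lemma integral_ipw_square:
  fixes f :: "real \<times> bool \<times> (int \<times> int \<Rightarrow> real^'m) \<Rightarrow> real"
  assumes "d \<in> dtrs" and [measurable]: "f \<in> borel_measurable baseline_space"
    and f_int: "integrable M (\<lambda>\<omega>. f (baseline \<omega>))"
  shows "(\<integral>\<omega>. (ipw d (A1 \<omega>) (R \<omega>) (A2 \<omega>))\<^sup>2 * f (baseline \<omega>) \<partial>M)
       = (\<integral>\<omega>. (2 + 2 * of_bool (fst d = 1 \<and> \<not> R1 \<omega>)) * f (baseline \<omega>) \<partial>M)"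
proof -
  have "(\<integral>\<omega>. (ipw d (A1 \<omega>) (R \<omega>) (A2 \<omega>))\<^sup>2 * f (baseline \<omega>) \<partial>M)
      = (\<integral>\<omega>. (ipw d (A1 \<omega>) (R1 \<omega>) (A2 \<omega>))\<^sup>2 * f (baseline \<omega>) \<partial>M)"
    by (intro Bochner_Integration.integral_cong) (simp_all add: ipw_response_eq)
  also have "\<dots> = (\<integral>\<omega>. (2 + 2 * of_bool (fst d = 1 \<and> \<not> R1 \<omega>)) * f (baseline \<omega>) \<partial>M)"
    unfolding integral_design_average[OF assms(2,3), of "\<lambda>a1 r a2. (ipw d a1 r a2)\<^sup>2"]
    by (simp add: path_mean_ipw_square assms(1))
  finally show ?thesis .
qed

lemma response_rate:
  "measure M {\<omega>\<in>space M. A1 \<omega> = 1 \<and> R \<omega>} / measure M {\<omega>\<in>space M. A1 \<omega> = 1}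
     = prob {\<omega>\<in>space M. R1 \<omega>}"
proof -
  have prob_integral: "prob {\<omega>\<in>space M. P \<omega>} = (\<integral>\<omega>. of_bool (P \<omega>) \<partial>M)"
    if "{\<omega>\<in>space M. P \<omega>} \<in> sets M" for P
  proof -
    have "(\<integral>\<omega>. of_bool (P \<omega>) \<partial>M) = (\<integral>\<omega>. indicator {\<omega>\<in>space M. P \<omega>} \<omega> \<partial>M)"
      by (intro Bochner_Integration.integral_cong) (auto simp: indicator_def)
    also have "\<dots> = prob {\<omega>\<in>space M. P \<omega>}" using that by simp
    finally show ?thesis by simp
  qed
  have "{\<omega>\<in>space M. A1 \<omega> = 1 \<and> R \<omega>} = {\<omega>\<in>space M. A1 \<omega> = 1 \<and> R1 \<omega>}"
    using cons_R by blast
  then have "prob {\<omega>\<in>space M. A1 \<omega> = 1 \<and> R \<omega>} = (\<integral>\<omega>. of_bool (A1 \<omega> = 1 \<and> R1 \<omega>) * 1 \<partial>M)"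
    using prob_integral[of "\<lambda>\<omega>. A1 \<omega> = 1 \<and> R1 \<omega>"] by simp
  also have "\<dots> = (\<integral>\<omega>. path_mean (\<lambda>a1 r a2. of_bool (a1 = 1 \<and> r)) (R1 \<omega>) * 1 \<partial>M)"
    by (rule integral_design_average) auto
  also have "\<dots> = (\<integral>\<omega>. of_bool (R1 \<omega>) \<partial>M) / 2"
    by (simp add: path_mean_treated_response)
  also have "\<dots> = prob {\<omega>\<in>space M. R1 \<omega>} / 2"
    using prob_integral[of R1] by simp
  finally show ?thesis
    unfolding A1_prob by simp
qed

end

locale adept_model = adept_design M X A1 A2 R R1 Yp
  for M :: "'a measure" and X :: "'a \<Rightarrow> real" and A1 A2 :: "'a \<Rightarrow> int" and R R1 :: "'a \<Rightarrow> bool"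
    and Yp :: "int \<times> int \<Rightarrow> 'a \<Rightarrow> real^'m" +
  fixes \<beta> :: "int \<times> int \<Rightarrow> real" and \<eta> \<sigma>2 \<rho> :: real and b2 :: int
  assumes meas_Yp[measurable]: "\<And>d. d \<in> dtrs \<Longrightarrow> Yp d \<in> borel_measurable M"
    and b2: "b2 = 1 \<or> b2 = -1"
    and X_sq_int: "integrable M (\<lambda>\<omega>. (X \<omega>)\<^sup>2)"
    and X_mean: "(\<integral>\<omega>. X \<omega> \<partial>M) = 0"
    and mean_model: "\<And>d j. d \<in> {(1, b2), (-1, 0)} \<Longrightarrow>
        AE \<omega> in M. real_cond_exp M (vimage_algebra (space M) X borel) (\<lambda>\<omega>. Yp d \<omega> $ j) \<omega>
                    = \<beta> d + \<eta> * X \<omega>"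
    and Y_sq_int: "\<And>d j. d \<in> {(1, b2), (-1, 0)} \<Longrightarrow> integrable M (\<lambda>\<omega>. (Yp d \<omega> $ j)\<^sup>2)"
    and sigma_pos: "0 < \<sigma>2"
    and cov: "\<And>d j k. d \<in> {(1, b2), (-1, 0)} \<Longrightarrow>
        (\<integral>\<omega>. (Yp d \<omega> $ j - (\<integral>\<omega>'. Yp d \<omega>' $ j \<partial>M))
             * (Yp d \<omega> $ k - (\<integral>\<omega>'. Yp d \<omega>' $ k \<partial>M)) \<partial>M) = \<sigma>2 * (exch \<rho> :: real^'m^'m) $ j $ k"
begin

definition cor2 :: real where
  "cor2 = \<eta>\<^sup>2 * variance X / \<sigma>2"

definition rho_star :: real where
  "rho_star = (\<rho> - cor2) / (1 - cor2)"

definition resid_mean_var :: real where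
  "resid_mean_var = \<sigma>2 * (1 - cor2) * (1 + (real CARD('m) - 1) * rho_star) / real CARD('m)"

definition resid :: "int \<times> int \<Rightarrow> 'm \<Rightarrow> 'a \<Rightarrow> real" where
  "resid d j \<omega> = Yp d \<omega> $ j - \<beta> d - \<eta> * X \<omega>"

definition cluster_resid :: "int \<times> int \<Rightarrow> real \<times> bool \<times> (int \<times> int \<Rightarrow> real^'m) \<Rightarrow> real" where
  "cluster_resid d z = (\<Sum>j\<in>UNIV. snd (snd z) d $ j - \<beta> d - \<eta> * fst z)"

lemma modelled_in_dtrs: "d \<in> {(1, b2), (-1, 0)} \<Longrightarrow> d \<in> dtrs"
  using b2 by (auto simp: dtrs_def)

lemma measurable_resid [measurable]: "d \<in> dtrs \<Longrightarrow> resid d j \<in> borel_measurable M"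
  unfolding resid_def by measurable

lemma measurable_cluster_resid [measurable]: "d \<in> dtrs \<Longrightarrow> cluster_resid d \<in> borel_measurable baseline_space"
  unfolding cluster_resid_def pot_space_def by measurable

lemma cluster_resid_baseline: "d \<in> dtrs \<Longrightarrow> cluster_resid d (baseline \<omega>) = (\<Sum>j\<in>UNIV. resid d j \<omega>)"
  by (simp add: cluster_resid_def resid_def)

lemma integrable_X: "integrable M X"
  by (rule square_integrable_imp_integrable[OF meas_X X_sq_int])

lemma integrable_Yp_nth: "d \<in> {(1, b2), (-1, 0)} \<Longrightarrow> integrable M (\<lambda>\<omega>. Yp d \<omega> $ j)"
  using modelled_in_dtrs by (intro square_integrable_imp_integrable[OF _ Y_sq_int]) auto

lemma integrable_X_mult_Yp_nth: "d \<in> {(1, b2), (-1, 0)} \<Longrightarrow> integrable M (\<lambda>\<omega>. X \<omega> * Yp d \<omega> $ j)"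
  using modelled_in_dtrs by (intro integrable_mult_square_integrable[OF X_sq_int Y_sq_int]) auto

lemma variance_X: "variance X = (\<integral>\<omega>. (X \<omega>)\<^sup>2 \<partial>M)"
  using X_mean by simp

sublocale baseline_subalgebra: finite_measure_subalgebra M "vimage_algebra (space M) X borel"
proof
  show "subalgebra M (vimage_algebra (space M) X borel)"
    unfolding subalgebra_def using meas_X
    by (simp add: sets_vimage_algebra2 measurable_def) (auto simp: measurable_def)
qed

lemma integral_Yp_nth:
  assumes "d \<in> {(1, b2), (-1, 0)}"
  shows "(\<integral>\<omega>. Yp d \<omega> $ j \<partial>M) = \<beta> d"
proof -
  have "(\<integral>\<omega>. Yp d \<omega> $ j \<partial>M)
      = (\<integral>\<omega>. real_cond_exp M (vimage_algebra (space M) X borel) (\<lambda>\<omega>. Yp d \<omega> $ j) \<omega> \<partial>M)"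
    using baseline_subalgebra.real_cond_exp_int(2)[OF integrable_Yp_nth[OF assms]] by simp
  also have "\<dots> = (\<integral>\<omega>. \<beta> d + \<eta> * X \<omega> \<partial>M)"
    using mean_model[OF assms] modelled_in_dtrs[OF assms] by (intro integral_cong_AE) auto
  also have "\<dots> = \<beta> d"
    using integrable_X X_mean by (simp add: prob_space)
  finally show ?thesis .
qed

lemma integral_X_mult_Yp_nth:
  assumes "d \<in> {(1, b2), (-1, 0)}"
  shows "(\<integral>\<omega>. X \<omega> * Yp d \<omega> $ j \<partial>M) = \<eta> * variance X"
proof -
  have X_meas: "X \<in> borel_measurable (vimage_algebra (space M) X borel)"
    by (rule measurable_vimage_algebra1) auto
  have "(\<integral>\<omega>. X \<omega> * Yp d \<omega> $ j \<partial>M)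
      = (\<integral>\<omega>. X \<omega> * real_cond_exp M (vimage_algebra (space M) X borel) (\<lambda>\<omega>. Yp d \<omega> $ j) \<omega> \<partial>M)"
    using baseline_subalgebra.real_cond_exp_intg(2)[OF integrable_X_mult_Yp_nth[OF assms] X_meas]
      modelled_in_dtrs[OF assms] by simp
  also have "\<dots> = (\<integral>\<omega>. \<beta> d * X \<omega> + \<eta> * (X \<omega>)\<^sup>2 \<partial>M)"
    using mean_model[OF assms, of j] modelled_in_dtrs[OF assms]
    by (intro integral_cong_AE) (auto elim!: AE_mp simp: algebra_simps power2_eq_square)
  also have "\<dots> = \<eta> * variance X"
    using integrable_X X_mean X_sq_int by (simp add: variance_X)
  finally show ?thesis .
qed

lemma integrable_resid_square:
  assumes "d \<in> {(1, b2), (-1, 0)}"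
  shows "integrable M (\<lambda>\<omega>. (resid d j \<omega>)\<^sup>2)"
proof -
  have "integrable M (\<lambda>\<omega>. (- \<beta> d + - \<eta> * X \<omega>)\<^sup>2)"
    using X_sq_int by (intro square_integrable_add) (auto simp: power_mult_distrib)
  then have "integrable M (\<lambda>\<omega>. (Yp d \<omega> $ j + (- \<beta> d + - \<eta> * X \<omega>))\<^sup>2)"
    using modelled_in_dtrs[OF assms] by (intro square_integrable_add[OF Y_sq_int[OF assms]]) auto
  moreover have "(\<lambda>\<omega>. (resid d j \<omega>)\<^sup>2) = (\<lambda>\<omega>. (Yp d \<omega> $ j + (- \<beta> d + - \<eta> * X \<omega>))\<^sup>2)"
    by (rule ext, simp add: resid_def, algebra)
  ultimately show ?thesis by simp
qed

lemma integrable_resid_mult: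
  "d \<in> {(1, b2), (-1, 0)} \<Longrightarrow> integrable M (\<lambda>\<omega>. resid d j \<omega> * resid d k \<omega>)"
  using modelled_in_dtrs
  by (intro integrable_mult_square_integrable integrable_resid_square) auto

lemma integral_resid_mult:
  assumes d: "d \<in> {(1, b2), (-1, 0)}"
  shows "(\<integral>\<omega>. resid d j \<omega> * resid d k \<omega> \<partial>M) = \<sigma>2 * (exch \<rho> :: real^'m^'m) $ j $ k - \<eta>\<^sup>2 * variance X"
proof -
  have "integrable M (\<lambda>\<omega>. (Yp d \<omega> $ j + - \<beta> d)\<^sup>2)" for j
    using modelled_in_dtrs[OF d] by (intro square_integrable_add[OF Y_sq_int[OF d]]) auto
  then have centred: "integrable M (\<lambda>\<omega>. (Yp d \<omega> $ j - \<beta> d) * (Yp d \<omega> $ k - \<beta> d))" for j k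
    using modelled_in_dtrs[OF d] by (intro integrable_mult_square_integrable) auto
  have "(\<integral>\<omega>. resid d j \<omega> * resid d k \<omega> \<partial>M) = (\<integral>\<omega>. (Yp d \<omega> $ j - \<beta> d) * (Yp d \<omega> $ k - \<beta> d)
      - \<eta> * (X \<omega> * Yp d \<omega> $ k) - \<eta> * (X \<omega> * Yp d \<omega> $ j) + 2 * \<eta> * \<beta> d * X \<omega> + \<eta>\<^sup>2 * (X \<omega>)\<^sup>2 \<partial>M)"
    by (rule Bochner_Integration.integral_cong) (auto simp: resid_def algebra_simps power2_eq_square)
  also have "\<dots> = (\<integral>\<omega>. (Yp d \<omega> $ j - \<beta> d) * (Yp d \<omega> $ k - \<beta> d) \<partial>M)
      - \<eta> * (\<integral>\<omega>. X \<omega> * Yp d \<omega> $ k \<partial>M) - \<eta> * (\<integral>\<omega>. X \<omega> * Yp d \<omega> $ j \<partial>M)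
      + 2 * \<eta> * \<beta> d * (\<integral>\<omega>. X \<omega> \<partial>M) + \<eta>\<^sup>2 * (\<integral>\<omega>. (X \<omega>)\<^sup>2 \<partial>M)"
    using centred integrable_X_mult_Yp_nth[OF d] integrable_X X_sq_int by simp
  also have "(\<integral>\<omega>. (Yp d \<omega> $ j - \<beta> d) * (Yp d \<omega> $ k - \<beta> d) \<partial>M) = \<sigma>2 * (exch \<rho> :: real^'m^'m) $ j $ k"
    using cov[OF d, of j k] by (simp add: integral_Yp_nth[OF d])
  finally show ?thesis
    unfolding integral_X_mult_Yp_nth[OF d] X_mean variance_X by (simp add: power2_eq_square)
qed

lemma integral_weighted_cluster_resid_square:
  assumes d: "d \<in> {(1, b2), (-1, 0)}"
    and [measurable]: "g \<in> borel_measurable M" and g_bound: "\<And>\<omega>. \<omega> \<in> space M \<Longrightarrow> \<bar>g \<omega>\<bar> \<le> 1"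
  shows "(\<integral>\<omega>. g \<omega> * (cluster_resid d (baseline \<omega>))\<^sup>2 \<partial>M)
       = (\<Sum>j\<in>UNIV. \<Sum>k\<in>UNIV. \<integral>\<omega>. g \<omega> * (resid d j \<omega> * resid d k \<omega>) \<partial>M)"
proof -
  have "integrable M (\<lambda>\<omega>. g \<omega> * (resid d j \<omega> * resid d k \<omega>))" for j k
    by (rule integrable_bounded_mult[OF integrable_resid_mult[OF d] _ g_bound]) simp_all
  moreover have "(cluster_resid d (baseline \<omega>))\<^sup>2 = (\<Sum>j\<in>UNIV. \<Sum>k\<in>UNIV. resid d j \<omega> * resid d k \<omega>)" for \<omega>
    using modelled_in_dtrs[OF d] by (simp add: cluster_resid_baseline power2_eq_square sum_product)
  ultimately show ?thesis
    by (simp add: sum_distrib_left Bochner_Integration.integral_sum)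
qed

lemma integrable_cluster_resid_square:
  "d \<in> {(1, b2), (-1, 0)} \<Longrightarrow> integrable M (\<lambda>\<omega>. (cluster_resid d (baseline \<omega>))\<^sup>2)"
  using integrable_resid_mult modelled_in_dtrs
  by (simp add: cluster_resid_baseline power2_eq_square sum_product)

lemma integral_cluster_resid_square_expand:
  assumes d: "d \<in> {(1, b2), (-1, 0)}"
  shows "(\<integral>\<omega>. (cluster_resid d (baseline \<omega>))\<^sup>2 \<partial>M)
       = real CARD('m) * \<sigma>2 * (1 + (real CARD('m) - 1) * \<rho> - real CARD('m) * cor2)"
proof -
  have "(\<integral>\<omega>. (cluster_resid d (baseline \<omega>))\<^sup>2 \<partial>M)
      = (\<Sum>j\<in>UNIV. \<Sum>k\<in>UNIV. \<sigma>2 * (exch \<rho> :: real^'m^'m) $ j $ k - \<eta>\<^sup>2 * variance X)"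
    using integral_weighted_cluster_resid_square[OF d, of "\<lambda>_. 1"] by (simp add: integral_resid_mult[OF d])
  also have "\<dots> = (\<Sum>j\<in>(UNIV :: 'm set). \<sigma>2 * (1 + (real CARD('m) - 1) * \<rho>) - real CARD('m) * (\<eta>\<^sup>2 * variance X))"
    by (simp add: sum_subtractf exch_row_sum flip: sum_distrib_left)
  also have "\<dots> = (\<Sum>j\<in>(UNIV :: 'm set). \<sigma>2 * (1 + (real CARD('m) - 1) * \<rho>) - real CARD('m) * (\<sigma>2 * cor2))"
    using sigma_pos by (simp add: cor2_def)
  finally show ?thesis
    by (simp add: algebra_simps)
qed

lemma resid_zero_if_cor2_eq_one:
  assumes d: "d \<in> {(1, b2), (-1, 0)}" and "cor2 = 1"
  shows "AE \<omega> in M. resid d j \<omega> = 0"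
proof -
  have "(\<integral>\<omega>. (resid d j \<omega>)\<^sup>2 \<partial>M) = \<sigma>2 - \<eta>\<^sup>2 * variance X"
    using integral_resid_mult[OF d, of j j] by (simp add: power2_eq_square exch_def)
  also have "\<dots> = \<sigma>2 * (1 - cor2)"
    using sigma_pos by (simp add: cor2_def field_simps)
  finally have "(\<integral>\<omega>. (resid d j \<omega>)\<^sup>2 \<partial>M) = 0"
    using assms(2) by simp
  then show ?thesis
    using integrable_resid_square[OF d] by (subst (asm) integral_nonneg_eq_0_iff_AE) auto
qed

text \<open>For cor2 = 1, where rho_star divides by zero, both sides vanish: the residuals are then
  almost surely zero and the right-hand side carries the factor 1 - cor2.\<close>
lemma integral_cluster_resid_square:
  assumes d: "d \<in> {(1, b2), (-1, 0)}"
  shows "(\<integral>\<omega>. (cluster_resid d (baseline \<omega>))\<^sup>2 \<partial>M) = (real CARD('m))\<^sup>2 * resid_mean_var"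
proof (cases "cor2 = 1")
  case True
  have "AE \<omega> in M. \<forall>j. resid d j \<omega> = 0"
    using resid_zero_if_cor2_eq_one[OF d True] by (simp add: AE_all_countable)
  then have "AE \<omega> in M. (cluster_resid d (baseline \<omega>))\<^sup>2 = 0"
    by eventually_elim (simp add: cluster_resid_baseline[OF modelled_in_dtrs[OF d]])
  then have "(\<integral>\<omega>. (cluster_resid d (baseline \<omega>))\<^sup>2 \<partial>M) = 0"
    using modelled_in_dtrs[OF d] by (simp add: integral_eq_zero_AE)
  then show ?thesis
    using True by (simp add: resid_mean_var_def)
next
  case False
  then have "(1 - cor2) * (1 + (real CARD('m) - 1) * rho_star) = 1 + (real CARD('m) - 1) * \<rho> - real CARD('m) * cor2"
    by (simp add: rho_star_def field_simps)
  then show ?thesis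
    unfolding integral_cluster_resid_square_expand[OF d] resid_mean_var_def
    by (simp add: power2_eq_square)
qed

lemma integral_nonresponder_cluster_resid_square_le:
  assumes loewner: "loewner_le
        (\<chi> j k. (\<integral>\<omega>. indicator {\<omega>. \<not> R1 \<omega>} \<omega>
                    * ((Yp (1, b2) \<omega> - (\<beta> (1, b2) + \<eta> * X \<omega>) *\<^sub>R (\<chi> i. 1)) $ j
                       * (Yp (1, b2) \<omega> - (\<beta> (1, b2) + \<eta> * X \<omega>) *\<^sub>R (\<chi> i. 1)) $ k) \<partial>M)
                 / measure M {\<omega>\<in>space M. \<not> R1 \<omega>})
        (\<chi> j k. (\<integral>\<omega>. (Yp (1, b2) \<omega> - (\<beta> (1, b2) + \<eta> * X \<omega>) *\<^sub>R (\<chi> i. 1)) $ j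
                       * (Yp (1, b2) \<omega> - (\<beta> (1, b2) + \<eta> * X \<omega>) *\<^sub>R (\<chi> i. 1)) $ k \<partial>M))"
  shows "(\<integral>\<omega>. of_bool (\<not> R1 \<omega>) * (cluster_resid (1, b2) (baseline \<omega>))\<^sup>2 \<partial>M)
       \<le> (1 - prob {\<omega>\<in>space M. R1 \<omega>}) * (\<integral>\<omega>. (cluster_resid (1, b2) (baseline \<omega>))\<^sup>2 \<partial>M)"
proof -
  have d: "(1, b2) \<in> {(1, b2), (-1::int, 0::int)}" by simp
  define q where "q = prob {\<omega>\<in>space M. \<not> R1 \<omega>}"
  have q_eq: "q = 1 - prob {\<omega>\<in>space M. R1 \<omega>}"
  proof -
    have "{\<omega>\<in>space M. \<not> R1 \<omega>} = space M - {\<omega>\<in>space M. R1 \<omega>}" by auto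
    then show ?thesis unfolding q_def by (simp add: prob_compl)
  qed
  have resid_nth: "(Yp (1, b2) \<omega> - (\<beta> (1, b2) + \<eta> * X \<omega>) *\<^sub>R (\<chi> i. 1)) $ j = resid (1, b2) j \<omega>" for \<omega> j
    by (simp add: resid_def)
  have indicator_eq: "indicator {\<omega>. \<not> R1 \<omega>} \<omega> = of_bool (\<not> R1 \<omega>)" for \<omega>
    by (simp add: indicator_def)
  let ?ones = "(\<chi> i. 1) :: real^'m"
  have "?ones \<bullet> ((\<chi> j k. (\<integral>\<omega>. of_bool (\<not> R1 \<omega>) * (resid (1, b2) j \<omega> * resid (1, b2) k \<omega>) \<partial>M) / q) *v ?ones)
      \<le> ?ones \<bullet> ((\<chi> j k. (\<integral>\<omega>. resid (1, b2) j \<omega> * resid (1, b2) k \<omega> \<partial>M)) *v ?ones)"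
    using loewner unfolding loewner_le_def resid_nth indicator_eq q_def by blast
  then have "(\<Sum>j\<in>UNIV. \<Sum>k\<in>UNIV. (\<integral>\<omega>. of_bool (\<not> R1 \<omega>) * (resid (1, b2) j \<omega> * resid (1, b2) k \<omega>) \<partial>M) / q)
      \<le> (\<Sum>j\<in>UNIV. \<Sum>k\<in>UNIV. \<integral>\<omega>. 1 * (resid (1, b2) j \<omega> * resid (1, b2) k \<omega>) \<partial>M)"
    by (simp add: inner_vec_def matrix_vector_mult_def)
  then have "(\<integral>\<omega>. of_bool (\<not> R1 \<omega>) * (cluster_resid (1, b2) (baseline \<omega>))\<^sup>2 \<partial>M) / q
      \<le> (\<integral>\<omega>. (cluster_resid (1, b2) (baseline \<omega>))\<^sup>2 \<partial>M)"
    using integral_weighted_cluster_resid_square[OF d, of "\<lambda>\<omega>. of_bool (\<not> R1 \<omega>)"]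
      integral_weighted_cluster_resid_square[OF d, of "\<lambda>_. 1"]
    by (simp add: sum_divide_distrib)
  then show ?thesis
    unfolding q_eq[symmetric] q_def by (rule integral_of_bool_mult_le[rotated]) measurable
qed

lemma integrable_mean_deriv_mult: "integrable M (\<lambda>\<omega>. mean_deriv d k (X \<omega>) * mean_deriv d l (X \<omega>))"
  using integrable_X X_sq_int
  by (cases "k = pidx d"; cases "k = eta_idx"; cases "l = pidx d"; cases "l = eta_idx")
     (simp_all add: mean_deriv_def power2_eq_square)

lemma integral_mean_deriv_mult:
  "(\<integral>\<omega>. mean_deriv d k (X \<omega>) * mean_deriv d l (X \<omega>) \<partial>M)
     = (if k = l then if k = eta_idx then variance X else if k = pidx d then 1 else 0 else 0)"
  by (cases "k = pidx d"; cases "k = eta_idx"; cases "l = pidx d"; cases "l = eta_idx")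
     (simp_all add: mean_deriv_def X_mean power2_eq_square prob_space)

end

locale adept_estimator = adept_model M X A1 A2 R R1 Yp \<beta> \<eta> \<sigma>2 \<rho> b2
  for M :: "'a measure" and X :: "'a \<Rightarrow> real" and A1 A2 :: "'a \<Rightarrow> int" and R R1 :: "'a \<Rightarrow> bool"
    and Yp :: "int \<times> int \<Rightarrow> 'a \<Rightarrow> real^'m" and \<beta> :: "int \<times> int \<Rightarrow> real" and \<eta> \<sigma>2 \<rho> :: real
    and b2 :: int +
  fixes Y :: "'a \<Rightarrow> real^'m" and V :: "real^'m^'m" and \<mu> :: real and \<theta> :: "real^4"
  assumes cons_Y: "\<forall>\<omega>\<in>space M. \<forall>d\<in>dtrs. consistent d (A1 \<omega>) (R \<omega>) (A2 \<omega>) \<longrightarrow> Y \<omega> = Yp d \<omega>"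
    and X_var_pos: "0 < variance X"
    and inverse_col_sum: "\<And>k. (\<Sum>j\<in>UNIV. matrix_inv V $ j $ k) = \<mu>"
    and inverse_col_sum_nonzero: "\<mu> \<noteq> 0"
    and theta_beta: "\<And>d. d \<in> {(1, b2), (-1, 0)} \<Longrightarrow> \<theta> $ pidx d = \<beta> d"
    and theta_eta: "\<theta> $ eta_idx = \<eta>"
begin

text \<open>The expected bread is diagonal: the three arms have disjoint intercepts, and the
  weights average to one over the design.\<close>
lemma integral_bread_fun:
  "(\<integral>\<omega>. bread_fun V (A1 \<omega>) (R \<omega>) (A2 \<omega>) (X \<omega>) $ k $ l \<partial>M)
     = (if k = l then real CARD('m) * \<mu> * (if k = eta_idx then 3 * variance X else 1) else 0)"
proof -
  have weighted: "(\<integral>\<omega>. ipw d (A1 \<omega>) (R \<omega>) (A2 \<omega>) * (mean_deriv d k (X \<omega>) * mean_deriv d l (X \<omega>)) \<partial>M)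
      = (\<integral>\<omega>. mean_deriv d k (X \<omega>) * mean_deriv d l (X \<omega>) \<partial>M)" if "d \<in> dtrs" for d
    using integral_ipw[OF that, of "\<lambda>z. mean_deriv d k (fst z) * mean_deriv d l (fst z)"]
      integrable_mean_deriv_mult[of d k l]
    by (simp add: mean_deriv_def)
  have "integrable M (\<lambda>\<omega>. ipw d (A1 \<omega>) (R \<omega>) (A2 \<omega>) * (mean_deriv d k (X \<omega>) * mean_deriv d l (X \<omega>)))" for d
    by (rule integrable_bounded_mult[OF integrable_mean_deriv_mult, where B = 4])
       (auto simp: ipw_def weight_def consistent_def)
  then have "(\<integral>\<omega>. bread_fun V (A1 \<omega>) (R \<omega>) (A2 \<omega>) (X \<omega>) $ k $ l \<partial>M)
      = (\<Sum>d\<in>dtrs. \<integral>\<omega>. mean_deriv d k (X \<omega>) * mean_deriv d l (X \<omega>) \<partial>M) * (real CARD('m) * \<mu>)"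
    by (simp add: bread_fun_nth[OF inverse_col_sum] Bochner_Integration.integral_sum weighted)
  also have "\<dots> = (if k = l then real CARD('m) * \<mu> * (if k = eta_idx then 3 * variance X else 1) else 0)"
    using exhaust_4[of k]
    by (auto simp: integral_mean_deriv_mult dtrs_def pidx_def eta_idx_def)
  finally show ?thesis .
qed

lemma integral_score_square:
  assumes d: "d \<in> {(1, b2), (-1, 0)}"
  shows "(\<integral>\<omega>. est_fun V \<theta> (A1 \<omega>) (R \<omega>) (A2 \<omega>) (X \<omega>) (Y \<omega>) $ pidx d
             * est_fun V \<theta> (A1 \<omega>) (R \<omega>) (A2 \<omega>) (X \<omega>) (Y \<omega>) $ pidx d \<partial>M)
       = \<mu>\<^sup>2 * (\<integral>\<omega>. (ipw d (A1 \<omega>) (R \<omega>) (A2 \<omega>))\<^sup>2 * (cluster_resid d (baseline \<omega>))\<^sup>2 \<partial>M)"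
proof -
  have dd: "d \<in> dtrs" by (rule modelled_in_dtrs[OF d])
  have "est_fun V \<theta> (A1 \<omega>) (R \<omega>) (A2 \<omega>) (X \<omega>) (Y \<omega>) $ pidx d
      = ipw d (A1 \<omega>) (R \<omega>) (A2 \<omega>) * \<mu> * cluster_resid d (baseline \<omega>)" if "\<omega> \<in> space M" for \<omega>
  proof (cases "consistent d (A1 \<omega>) (R \<omega>) (A2 \<omega>)")
    case True
    then have "Y \<omega> = Yp d \<omega>" using cons_Y that dd by blast
    then show ?thesis
      by (simp add: est_fun_pidx[OF inverse_col_sum dd] cluster_resid_def dd theta_beta[OF d] theta_eta
          mult.commute)
  next
    case False
    then show ?thesis by (simp add: est_fun_pidx[OF inverse_col_sum dd] ipw_def)
  qed
  then show ?thesis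
    by (simp add: power2_eq_square mult_ac cong: Bochner_Integration.integral_cong)
qed

lemma sandwich_tau2_eq:
  assumes d: "d \<in> {(1, b2), (-1, 0)}"
  shows "sandwich_tau2 M V \<theta> A1 R A2 X Y d
       = (\<integral>\<omega>. (ipw d (A1 \<omega>) (R \<omega>) (A2 \<omega>))\<^sup>2 * (cluster_resid d (baseline \<omega>))\<^sup>2 \<partial>M) / (real CARD('m))\<^sup>2"
proof -
  define c where "c k = real CARD('m) * \<mu> * (if k = eta_idx then 3 * variance X else 1)" for k
  have "c k \<noteq> 0" for k
    unfolding c_def using inverse_col_sum_nonzero X_var_pos by simp
  moreover have "(\<chi> k l. \<integral>\<omega>. bread_fun V (A1 \<omega>) (R \<omega>) (A2 \<omega>) (X \<omega>) $ k $ l \<partial>M)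
      = (\<chi> k l. if k = l then c k else 0)"
    by (simp add: integral_bread_fun c_def vec_eq_iff)
  ultimately have "sandwich_tau2 M V \<theta> A1 R A2 X Y d
      = (\<integral>\<omega>. est_fun V \<theta> (A1 \<omega>) (R \<omega>) (A2 \<omega>) (X \<omega>) (Y \<omega>) $ pidx d
             * est_fun V \<theta> (A1 \<omega>) (R \<omega>) (A2 \<omega>) (X \<omega>) (Y \<omega>) $ pidx d \<partial>M) / (c (pidx d))\<^sup>2"
    unfolding sandwich_tau2_def Let_def by (simp add: sandwich_diag_nth)
  then show ?thesis
    using inverse_col_sum_nonzero
    by (simp add: integral_score_square[OF d] c_def power_mult_distrib)
qed

lemma sandwich_tau2_control: "sandwich_tau2 M V \<theta> A1 R A2 X Y (-1, 0) = 2 * resid_mean_var"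
proof -
  have d: "(-1, 0) \<in> {(1, b2), (-1::int, 0::int)}" by simp
  have "(\<integral>\<omega>. (ipw (-1, 0) (A1 \<omega>) (R \<omega>) (A2 \<omega>))\<^sup>2 * (cluster_resid (-1, 0) (baseline \<omega>))\<^sup>2 \<partial>M)
      = 2 * (\<integral>\<omega>. (cluster_resid (-1, 0) (baseline \<omega>))\<^sup>2 \<partial>M)"
    using integral_ipw_square[of "(-1, 0)" "\<lambda>z. (cluster_resid (-1, 0) z)\<^sup>2"]
      integrable_cluster_resid_square[OF d] modelled_in_dtrs[OF d]
    by simp
  then show ?thesis
    by (simp add: sandwich_tau2_eq[OF d] integral_cluster_resid_square[OF d])
qed

lemma sandwich_tau2_treated_le:
  assumes loewner: "loewner_le
        (\<chi> j k. (\<integral>\<omega>. indicator {\<omega>. \<not> R1 \<omega>} \<omega>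
                    * ((Yp (1, b2) \<omega> - (\<beta> (1, b2) + \<eta> * X \<omega>) *\<^sub>R (\<chi> i. 1)) $ j
                       * (Yp (1, b2) \<omega> - (\<beta> (1, b2) + \<eta> * X \<omega>) *\<^sub>R (\<chi> i. 1)) $ k) \<partial>M)
                 / measure M {\<omega>\<in>space M. \<not> R1 \<omega>})
        (\<chi> j k. (\<integral>\<omega>. (Yp (1, b2) \<omega> - (\<beta> (1, b2) + \<eta> * X \<omega>) *\<^sub>R (\<chi> i. 1)) $ j
                       * (Yp (1, b2) \<omega> - (\<beta> (1, b2) + \<eta> * X \<omega>) *\<^sub>R (\<chi> i. 1)) $ k \<partial>M))"
  shows "sandwich_tau2 M V \<theta> A1 R A2 X Y (1, b2) \<le> 2 * (2 - prob {\<omega>\<in>space M. R1 \<omega>}) * resid_mean_var"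
proof -
  have d: "(1, b2) \<in> {(1, b2), (-1::int, 0::int)}" by simp
  let ?S = "\<lambda>\<omega>. (cluster_resid (1, b2) (baseline \<omega>))\<^sup>2"
  have "(\<integral>\<omega>. (ipw (1, b2) (A1 \<omega>) (R \<omega>) (A2 \<omega>))\<^sup>2 * ?S \<omega> \<partial>M)
      = (\<integral>\<omega>. 2 * ?S \<omega> + 2 * (of_bool (\<not> R1 \<omega>) * ?S \<omega>) \<partial>M)"
    using integral_ipw_square[of "(1, b2)" "\<lambda>z. (cluster_resid (1, b2) z)\<^sup>2"]
      integrable_cluster_resid_square[OF d] modelled_in_dtrs[OF d]
    by (simp add: algebra_simps)
  also have "\<dots> = 2 * (\<integral>\<omega>. ?S \<omega> \<partial>M) + 2 * (\<integral>\<omega>. of_bool (\<not> R1 \<omega>) * ?S \<omega> \<partial>M)"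
    using integrable_cluster_resid_square[OF d]
      integrable_response_mult[of "\<lambda>z. (cluster_resid (1, b2) z)\<^sup>2" "\<lambda>r. of_bool (\<not> r)"]
      modelled_in_dtrs[OF d]
    by simp
  also have "\<dots> \<le> 2 * (\<integral>\<omega>. ?S \<omega> \<partial>M) + 2 * ((1 - prob {\<omega>\<in>space M. R1 \<omega>}) * (\<integral>\<omega>. ?S \<omega> \<partial>M))"
    using integral_nonresponder_cluster_resid_square_le[OF loewner] by simp
  also have "\<dots> = (real CARD('m))\<^sup>2 * (2 * (2 - prob {\<omega>\<in>space M. R1 \<omega>}) * resid_mean_var)"
    by (simp add: integral_cluster_resid_square[OF d] algebra_simps)
  finally show ?thesis
    by (simp add: sandwich_tau2_eq[OF d] divide_le_eq mult.commute)
qed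

end

lemma sample_size_factor_le:
  fixes z \<delta> \<sigma>2 c \<rho>s m p \<tau>1 \<tau>0 :: real
  assumes "0 < \<delta>" "0 < \<sigma>2" "0 < m"
    and "\<tau>1 \<le> 2 * (2 - p) * \<sigma>2 * (1 - c) * (1 + (m - 1) * \<rho>s) / m"
    and "\<tau>0 = 2 * \<sigma>2 * (1 - c) * (1 + (m - 1) * \<rho>s) / m"
  shows "z\<^sup>2 * (\<tau>1 + \<tau>0) / (\<delta>\<^sup>2 * \<sigma>2)
       \<le> 4 * z\<^sup>2 / (m * \<delta>\<^sup>2) * (1 + (m - 1) * \<rho>s) * (1 + (1 - p) / 2) * (1 - c)"
proof -
  have "z\<^sup>2 * (\<tau>1 + \<tau>0) / (\<delta>\<^sup>2 * \<sigma>2)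
      \<le> z\<^sup>2 * (2 * (3 - p) * \<sigma>2 * (1 - c) * (1 + (m - 1) * \<rho>s) / m) / (\<delta>\<^sup>2 * \<sigma>2)"
    using assms by (intro divide_right_mono mult_left_mono) (auto simp: field_simps)
  also have "\<dots> = 4 * z\<^sup>2 / (m * \<delta>\<^sup>2) * (1 + (m - 1) * \<rho>s) * (1 + (1 - p) / 2) * (1 - c)"
    using assms(1-3) by (simp add: field_simps)
  finally show ?thesis .
qed

theorem mainTheorem6:
  fixes M :: "'a measure"
    and X :: "'a \<Rightarrow> real"
    and A1 A2 :: "'a \<Rightarrow> int"
    and R R1 :: "'a \<Rightarrow> bool"
    and Y :: "'a \<Rightarrow> real^'m"
    and Yp :: "int \<times> int \<Rightarrow> 'a \<Rightarrow> real^'m"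
    and \<beta> :: "int \<times> int \<Rightarrow> real"
    and \<eta> \<sigma>2 \<rho> s2 r :: real
    and b2 :: int
    and \<theta> :: "real^4"
  assumes P: "prob_space M"
    and meas_X: "X \<in> borel_measurable M"
    and meas_A1: "A1 \<in> measurable M (count_space UNIV)"
    and meas_A2: "A2 \<in> measurable M (count_space UNIV)"
    and meas_R: "R \<in> measurable M (count_space UNIV)"
    and meas_R1: "R1 \<in> measurable M (count_space UNIV)"
    and meas_Y: "Y \<in> borel_measurable M"
    and meas_Yp: "\<And>d. d \<in> dtrs \<Longrightarrow> Yp d \<in> borel_measurable M"
    and A1_vals: "\<forall>\<omega>\<in>space M. A1 \<omega> = 1 \<or> A1 \<omega> = -1"
    and A1_prob: "measure M {\<omega>\<in>space M. A1 \<omega> = 1} = 1/2"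
    and A2_vals: "\<forall>\<omega>\<in>space M. A2 \<omega> = 1 \<or> A2 \<omega> = -1"
    and A2_prob: "measure M {\<omega>\<in>space M. A2 \<omega> = 1} = 1/2"
    and A1_indep: "indep_rv M (count_space UNIV) A1
                     (borel \<Otimes>\<^sub>M count_space UNIV \<Otimes>\<^sub>M pot_space)
                     (\<lambda>\<omega>. (X \<omega>, R1 \<omega>, (\<lambda>d\<in>dtrs. Yp d \<omega>)))"
    and A2_indep: "indep_rv M (count_space UNIV) A2
                     (count_space UNIV \<Otimes>\<^sub>M borel \<Otimes>\<^sub>M count_space UNIV \<Otimes>\<^sub>M pot_space)
                     (\<lambda>\<omega>. (A1 \<omega>, X \<omega>, R1 \<omega>, (\<lambda>d\<in>dtrs. Yp d \<omega>)))"
    \<comment> \<open>(a) consistency\<close>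
    and cons_R: "\<forall>\<omega>\<in>space M. A1 \<omega> = 1 \<longrightarrow> R \<omega> = R1 \<omega>"
    and cons_Y: "\<forall>\<omega>\<in>space M. \<forall>d\<in>dtrs. consistent d (A1 \<omega>) (R \<omega>) (A2 \<omega>) \<longrightarrow> Y \<omega> = Yp d \<omega>"
    and b2: "b2 = 1 \<or> b2 = -1"
    and X_sq_int: "integrable M (\<lambda>\<omega>. (X \<omega>)\<^sup>2)"
    and X_mean: "(\<integral>\<omega>. X \<omega> \<partial>M) = 0"
    and X_var_pos: "0 < prob_space.variance M X"
    \<comment> \<open>(b) correct mean model\<close>
    and mean_model: "\<And>d j. d \<in> {(1, b2), (-1, 0)} \<Longrightarrow>
        AE \<omega> in M. real_cond_exp M (vimage_algebra (space M) X borel) (\<lambda>\<omega>. Yp d \<omega> $ j) \<omega>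
                    = \<beta> d + \<eta> * X \<omega>"
    \<comment> \<open>(c) exchangeable covariance\<close>
    and Y_sq_int: "\<And>d j. d \<in> {(1, b2), (-1, 0)} \<Longrightarrow> integrable M (\<lambda>\<omega>. (Yp d \<omega> $ j)\<^sup>2)"
    and sigma_pos: "0 < \<sigma>2"
    and cov: "\<And>d j k. d \<in> {(1, b2), (-1, 0)} \<Longrightarrow>
        (\<integral>\<omega>. (Yp d \<omega> $ j - (\<integral>\<omega>'. Yp d \<omega>' $ j \<partial>M))
             * (Yp d \<omega> $ k - (\<integral>\<omega>'. Yp d \<omega>' $ k \<partial>M)) \<partial>M) = \<sigma>2 * (exch \<rho> :: real^'m^'m) $ j $ k"
    \<comment> \<open>(d) Loewner condition on the residual second moment given non-response\<close>
    and loewner: "loewner_le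
        (\<chi> j k. (\<integral>\<omega>. indicator {\<omega>. \<not> R1 \<omega>} \<omega>
                    * ((Yp (1, b2) \<omega> - (\<beta> (1, b2) + \<eta> * X \<omega>) *\<^sub>R (\<chi> i. 1)) $ j
                       * (Yp (1, b2) \<omega> - (\<beta> (1, b2) + \<eta> * X \<omega>) *\<^sub>R (\<chi> i. 1)) $ k) \<partial>M)
                 / measure M {\<omega>\<in>space M. \<not> R1 \<omega>})
        (\<chi> j k. (\<integral>\<omega>. (Yp (1, b2) \<omega> - (\<beta> (1, b2) + \<eta> * X \<omega>) *\<^sub>R (\<chi> i. 1)) $ j
                       * (Yp (1, b2) \<omega> - (\<beta> (1, b2) + \<eta> * X \<omega>) *\<^sub>R (\<chi> i. 1)) $ k \<partial>M))"
    and s2_pos: "0 < s2"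
    and V_pd: "\<forall>v::real^'m. v \<noteq> 0 \<longrightarrow> 0 < v \<bullet> (exch r *v v)"
    \<comment> \<open>parameter vector at which the sandwich is evaluated (true values)\<close>
    and theta_1: "\<theta> $ pidx (1, b2) = \<beta> (1, b2)"
    and theta_m1: "\<theta> $ pidx (-1, 0) = \<beta> (-1, 0)"
    and theta_eta: "\<theta> $ eta_idx = \<eta>"
  defines "m \<equiv> real CARD('m)"
    and "c \<equiv> \<eta>\<^sup>2 * prob_space.variance M X / \<sigma>2"
    and "\<rho>s \<equiv> (\<rho> - \<eta>\<^sup>2 * prob_space.variance M X / \<sigma>2) / (1 - \<eta>\<^sup>2 * prob_space.variance M X / \<sigma>2)"
    and "p1 \<equiv> measure M {\<omega>\<in>space M. A1 \<omega> = 1 \<and> R \<omega>} / measure M {\<omega>\<in>space M. A1 \<omega> = 1}"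
    and "\<tau>1 \<equiv> sandwich_tau2 M (s2 *\<^sub>R exch r) \<theta> A1 R A2 X Y (1, b2)"
    and "\<tau>0 \<equiv> sandwich_tau2 M (s2 *\<^sub>R exch r) \<theta> A1 R A2 X Y (-1, 0)"
  shows "\<tau>1 \<le> 2 * (2 - p1) * \<sigma>2 * (1 - c) * (1 + (m - 1) * \<rho>s) / m
       \<and> \<tau>0 = 2 * \<sigma>2 * (1 - c) * (1 + (m - 1) * \<rho>s) / m
       \<and> (\<forall>\<delta> \<alpha> \<beta>'. 0 < \<delta> \<longrightarrow> 0 < \<alpha> \<longrightarrow> \<alpha> < 1 \<longrightarrow> 0 < \<beta>' \<longrightarrow> \<beta>' < 1 \<longrightarrow>
            (z_upper \<beta>' + z_upper (\<alpha> / 2))\<^sup>2 * (\<tau>1 + \<tau>0) / (\<delta>\<^sup>2 * \<sigma>2)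
            \<le> 4 * (z_upper \<beta>' + z_upper (\<alpha> / 2))\<^sup>2 / (m * \<delta>\<^sup>2)
               * (1 + (m - 1) * \<rho>s) * (1 + (1 - p1) / 2) * (1 - c))"
proof -
  define lam where "lam = s2 * (1 + (real CARD('m) - 1) * r)"
  have lam_pos: "0 < lam"
    and col_sum: "\<And>k. (\<Sum>j\<in>UNIV. matrix_inv (s2 *\<^sub>R exch r :: real^'m^'m) $ j $ k) = 1 / lam"
    using exch_inverse_col_sum[OF s2_pos V_pd] unfolding lam_def by auto
  have theta_beta: "\<And>d. d \<in> {(1, b2), (-1, 0)} \<Longrightarrow> \<theta> $ pidx d = \<beta> d"
    using theta_1 theta_m1 by auto
  interpret adept_estimator M X A1 A2 R R1 Yp \<beta> \<eta> \<sigma>2 \<rho> b2 Y "s2 *\<^sub>R exch r" "1 / lam" \<theta>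
    by (intro adept_estimator.intro adept_model.intro adept_design.intro
        adept_estimator_axioms.intro adept_model_axioms.intro adept_design_axioms.intro)
       (fact P meas_X meas_A1 meas_A2 meas_R meas_R1 A1_vals A1_prob A2_vals A2_prob A1_indep A2_indep
          cons_R meas_Yp b2 X_sq_int X_mean mean_model Y_sq_int sigma_pos cov cons_Y X_var_pos
          col_sum theta_beta theta_eta | use lam_pos in simp)+
  have p1: "p1 = prob {\<omega>\<in>space M. R1 \<omega>}"
    unfolding p1_def by (rule response_rate)
  have K: "resid_mean_var = \<sigma>2 * (1 - c) * (1 + (m - 1) * \<rho>s) / m"
    unfolding resid_mean_var_def rho_star_def cor2_def c_def \<rho>s_def m_def ..
  have \<tau>0: "\<tau>0 = 2 * \<sigma>2 * (1 - c) * (1 + (m - 1) * \<rho>s) / m"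
    unfolding \<tau>0_def sandwich_tau2_control K by simp
  have \<tau>1: "\<tau>1 \<le> 2 * (2 - p1) * \<sigma>2 * (1 - c) * (1 + (m - 1) * \<rho>s) / m"
    using sandwich_tau2_treated_le[OF loewner] unfolding \<tau>1_def p1 K by simp
  show ?thesis
    using \<tau>0 \<tau>1 sample_size_factor_le[OF _ sigma_pos _ \<tau>1 \<tau>0] by (simp add: m_def)
qed

end
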